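(* Let $\alpha>-1$ and let $\phi(w)=aw+b$ with $a>0$ and $\mathrm{Re}(b)\ge 0$. Then $C_\phi$ is not Li-Yorke chaotic on $\mathcal{A}^2_\alpha(\mathbb{C}_+)$.
   Context: $\mathbb{C}_+=\{z\in\mathbb{C}:\mathrm{Re}(z)>0\}$. For $\alpha>-1$, $\mathcal{A}^2_\alpha(\mathbb{C}_+)$ is the Hilbert space of analytic $f:\mathbb{C}_+\to\mathbb{C}$ with $\|f\|^2=\frac{1}{\pi}\int_{-\infty}^{\infty}\int_0^\infty |f(x+iy)|^2x^\alpha\,dx\,dy<\infty$. $C_\phi f=f\circ\phi$ is the (bounded) composition operator. A bounded operator $T$ on a Banach space $X$ is Li-Yorke chaotic if there exists $x\in X$ with $\liminf_{n\to\infty}\|T^nx\|=0$ and $\limsup_{n\to\infty}\|T^nx\|=\infty$. *)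

theory Defs
  imports "HOL-Complex_Analysis.Complex_Analysis" "HOL-Library.Liminf_Limsup"
begin

definition right_half_plane :: "complex set" where
  "right_half_plane = {z. Re z > 0}"

definition bergman_norm_sq :: "real \<Rightarrow> (complex \<Rightarrow> complex) \<Rightarrow> ennreal" where
  "bergman_norm_sq \<alpha> f =
     ennreal (1 / pi) * (\<integral>\<^sup>+ z. ennreal ((cmod (f z))\<^sup>2 * (Re z) powr \<alpha>)
                          * indicator right_half_plane z \<partial>lborel)"

definition bergman_space :: "real \<Rightarrow> (complex \<Rightarrow> complex) set" where
  "bergman_space \<alpha> = {f. f holomorphic_on right_half_plane \<and> bergman_norm_sq \<alpha> f < \<infinity>}"

definition bergman_norm :: "real \<Rightarrow> (complex \<Rightarrow> complex) \<Rightarrow> real" where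
  "bergman_norm \<alpha> f = sqrt (enn2real (bergman_norm_sq \<alpha> f))"

definition comp_op :: "(complex \<Rightarrow> complex) \<Rightarrow> (complex \<Rightarrow> complex) \<Rightarrow> (complex \<Rightarrow> complex)" where
  "comp_op \<phi> f = f \<circ> \<phi>"

definition li_yorke_chaotic :: "'a set \<Rightarrow> ('a \<Rightarrow> real) \<Rightarrow> ('a \<Rightarrow> 'a) \<Rightarrow> bool" where
  "li_yorke_chaotic X N T \<longleftrightarrow>
     (\<exists>x\<in>X. liminf (\<lambda>n. ereal (N ((T ^^ n) x))) = 0 \<and>
            limsup (\<lambda>n. ereal (N ((T ^^ n) x))) = \<infinity>)"

end

theory Submission
  imports Defs
begin

text \<open>Iterating \<phi>(w) = a w + b gives \<phi>_n(w) = a^n w + b_n with b_n = (1 + a + ... + a^(n-1)) b, and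
  the substitution u = a^n w + b_n gives |C_\<phi>^n f|^2 = a^(-(2+\<alpha>)n) P(Re b_n) / \<pi>, where P(c) is the
  integral of |f(u)|^2 (Re u - c)^\<alpha> over Re u > c.

  If a \<ge> 1 the orbit is bounded, because P(c) \<le> K P(0) for c \<ge> 0. For \<alpha> \<ge> 0 this is monotonicity
  of the weight. For \<alpha> < 0 the weight is singular at Re u = c; there |f(u)|^2 is bounded by its means
  over the circles of radius between c/4 and c/2 around u, which moves the singular weight to a region
  where (Re u)^\<alpha> is comparable; the price is the integrability of |cos|^\<alpha>.

  If a < 1 then Re b_n \<le> Re b / (1 - a), so P(Re b_n) is bounded below by a weighted integral of |f|^2
  over a fixed half-plane, which is positive unless f = 0. Hence the orbit is either identically 0 or
  bounded away from 0.\<close>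

lemma cos_ge_one_minus_square_half:
  fixes y :: real assumes "y \<ge> 0" shows "1 - y\<^sup>2 / 2 \<le> cos y"
proof -
  let ?f = "\<lambda>x. cos x - 1 + x\<^sup>2 / 2"
  have "\<And>u. \<lbrakk>0 \<le> u; u \<le> y\<rbrakk> \<Longrightarrow> (?f has_real_derivative (u - sin u)) (at u)"
    by (auto intro!: derivative_eq_intros simp: field_simps)
  then have "?f 0 \<le> ?f y"
    by (intro DERIV_nonneg_imp_nondecreasing [OF assms]) (metis diff_ge_0_iff_ge sin_x_le_x)
  then show ?thesis by simp
qed

lemma sin_ge_cubic_taylor:
  fixes y :: real assumes "y \<ge> 0" shows "y - y^3 / 6 \<le> sin y"
proof -
  let ?f = "\<lambda>x. sin x - x + x^3 / 6"
  have "\<And>u. \<lbrakk>0 \<le> u; u \<le> y\<rbrakk> \<Longrightarrow> (?f has_real_derivative (cos u - 1 + u\<^sup>2 / 2)) (at u)"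
    by (auto intro!: derivative_eq_intros simp: field_simps)
  then have "?f 0 \<le> ?f y"
    using cos_ge_one_minus_square_half by (intro DERIV_nonneg_imp_nondecreasing [OF assms]) force
  then show ?thesis by simp
qed

lemma abs_sin_ge_half_abs:
  fixes x :: real assumes "\<bar>x\<bar> \<le> pi / 2" shows "\<bar>x\<bar> / 2 \<le> \<bar>sin x\<bar>"
proof -
  have "y / 2 \<le> sin y" if "0 \<le> y" "y \<le> pi / 2" for y :: real
  proof -
    have "pi \<le> 3.2" using pi_approx by simp
    then have "y \<le> 1.6" using that by linarith
    then have "y * y \<le> 1.6 * 1.6" using that by (intro mult_mono) auto
    then have "y\<^sup>2 \<le> 3" by (simp add: power2_eq_square)
    then have "y^3 / 6 \<le> y / 2"
      using mult_left_mono[of "y\<^sup>2" 3 y] that by (simp add: power2_eq_square power3_eq_cube)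
    then show ?thesis using sin_ge_cubic_taylor[OF that(1)] by linarith
  qed
  from this[of "\<bar>x\<bar>"] show ?thesis
    using assms by (cases "x \<ge> 0") auto
qed

lemma abs_cos_2pi_ge_min_dist:
  fixes t :: real assumes "0 \<le> t" "t \<le> 1"
  shows "min \<bar>t - 1/4\<bar> \<bar>t - 3/4\<bar> \<le> \<bar>cos (2*pi*t)\<bar>"
proof -
  have near_zero: "\<bar>t - m\<bar> \<le> \<bar>cos (2*pi*t)\<bar>"
    if m: "\<bar>cos (2*pi*t)\<bar> = \<bar>sin (2*pi*(m - t))\<bar>" "\<bar>t - m\<bar> \<le> 1/4" for m :: real
  proof -
    have "\<bar>2*pi*(m - t)\<bar> \<le> pi / 2"
      using m(2) pi_gt_zero by (simp add: abs_mult abs_minus_commute)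
    then have "\<bar>2*pi*(m - t)\<bar> / 2 \<le> \<bar>cos (2*pi*t)\<bar>"
      using abs_sin_ge_half_abs m(1) by simp
    then have "pi * \<bar>t - m\<bar> \<le> \<bar>cos (2*pi*t)\<bar>"
      using pi_gt_zero by (simp add: abs_mult abs_minus_commute)
    moreover have "\<bar>t - m\<bar> \<le> pi * \<bar>t - m\<bar>"
      using pi_gt3 mult_right_mono[of 1 pi "\<bar>t - m\<bar>"] by simp
    ultimately show ?thesis by linarith
  qed
  show ?thesis
  proof (cases "t \<le> 1/2")
    case True
    have "cos (2*pi*t) = sin (2*pi*(1/4 - t))"
      by (simp add: cos_sin_eq algebra_simps)
    then have "\<bar>t - 1/4\<bar> \<le> \<bar>cos (2*pi*t)\<bar>"
      using True assms by (intro near_zero) (auto simp: abs_if)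
    then show ?thesis by linarith
  next
    case False
    have "cos (2*pi*t) = - sin (2*pi*(3/4 - t))"
      using sin_periodic_pi[of "2*pi*(1/4 - t)"] by (simp add: cos_sin_eq algebra_simps)
    then have "\<bar>t - 3/4\<bar> \<le> \<bar>cos (2*pi*t)\<bar>"
      using False assms by (intro near_zero) (auto simp: abs_if)
    then show ?thesis by linarith
  qed
qed

lemma AE_cos_2pi_nonzero: "AE t in lborel. t \<in> {0..1} \<longrightarrow> cos (2*pi*t) \<noteq> 0"
  using AE_lborel_singleton[of "1/4"] AE_lborel_singleton[of "3/4"]
proof eventually_elim
  case (elim t)
  show ?case
    using abs_cos_2pi_ge_min_dist[of t] elim by (auto simp: min_def split: if_splits)
qed

lemma nn_integral_powr_atLeastAtMost_0:
  fixes \<alpha> L :: real assumes "\<alpha> > -1" "L \<ge> 0"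
  shows "(\<integral>\<^sup>+s. ennreal (s powr \<alpha>) * indicator {0..L} s \<partial>lborel) = ennreal (L powr (\<alpha>+1) / (\<alpha>+1))"
  by (rule nn_integral_has_integral_lebesgue'[OF _ has_integral_powr_from_0[OF assms]]) simp

lemma nn_integral_powr_interval_le:
  fixes \<alpha> L a :: real assumes "\<alpha> > -1" "\<alpha> \<le> 0" "L \<ge> 0"
  shows "(\<integral>\<^sup>+s. ennreal (s powr \<alpha>) * indicator {0<..} s * indicator {a..a+L} s \<partial>lborel)
      \<le> ennreal (L powr (\<alpha>+1) / (\<alpha>+1))"
proof (cases "a \<ge> 0")
  case True
  have "(\<integral>\<^sup>+s. ennreal (s powr \<alpha>) * indicator {0<..} s * indicator {a..a+L} s \<partial>lborel)
      = (\<integral>\<^sup>+s. ennreal ((a + 1 * s) powr \<alpha>) * indicator {0<..} (a + 1 * s)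
                * indicator {a..a+L} (a + 1 * s) \<partial>lborel)"
    by (subst nn_integral_real_affine[where c=1 and t=a]) auto
  also have "\<dots> \<le> (\<integral>\<^sup>+s. ennreal (s powr \<alpha>) * indicator {0..L} s \<partial>lborel)"
  proof (rule nn_integral_mono_AE)
    show "AE s in lborel. ennreal ((a + 1 * s) powr \<alpha>) * indicator {0<..} (a + 1 * s)
        * indicator {a..a+L} (a + 1 * s) \<le> ennreal (s powr \<alpha>) * indicator {0..L} s"
      using AE_lborel_singleton[of 0]
    proof eventually_elim
      case (elim s)
      have "(a + s) powr \<alpha> \<le> s powr \<alpha>" if "0 < s"
        using powr_mono2'[of \<alpha> s "a+s"] assms True that by auto
      then show ?case using elim by (auto simp: indicator_def)
    qed
  qed
  finally show ?thesis using nn_integral_powr_atLeastAtMost_0 assms by auto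
next
  case False
  have "(\<integral>\<^sup>+s. ennreal (s powr \<alpha>) * indicator {0<..} s * indicator {a..a+L} s \<partial>lborel)
     \<le> (\<integral>\<^sup>+s. ennreal (s powr \<alpha>) * indicator {0..L} s \<partial>lborel)"
    using False by (intro nn_integral_mono) (auto simp: indicator_def)
  then show ?thesis using nn_integral_powr_atLeastAtMost_0 assms by auto
qed

lemma nn_integral_abs_powr_centered:
  fixes \<alpha> m :: real assumes "\<alpha> > -1"
  shows "(\<integral>\<^sup>+s. ennreal (\<bar>s - m\<bar> powr \<alpha>) * indicator {m-1..m+1} s \<partial>lborel) = ennreal (2 / (\<alpha>+1))"
proof -
  have split: "ennreal (\<bar>s - m\<bar> powr \<alpha>) * indicator {m-1..m+1} s =
     ennreal ((s - m) powr \<alpha>) * indicator {m..m+1} s + ennreal ((m - s) powr \<alpha>) * indicator {m-1..<m} s" for s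
    by (auto simp: indicator_def abs_if)
  have right: "(\<integral>\<^sup>+s. ennreal ((s - m) powr \<alpha>) * indicator {m..m+1} s \<partial>lborel) = ennreal (1 / (\<alpha>+1))"
  proof -
    have "(\<integral>\<^sup>+s. ennreal ((s - m) powr \<alpha>) * indicator {m..m+1} s \<partial>lborel)
       = (\<integral>\<^sup>+s. ennreal ((m + 1 * s - m) powr \<alpha>) * indicator {m..m+1} (m + 1 * s) \<partial>lborel)"
      by (subst nn_integral_real_affine[where c=1 and t=m]) auto
    also have "\<dots> = (\<integral>\<^sup>+s. ennreal (s powr \<alpha>) * indicator {0..1} s \<partial>lborel)"
      by (intro nn_integral_cong) (auto simp: indicator_def)
    finally show ?thesis using nn_integral_powr_atLeastAtMost_0[of \<alpha> 1] assms by simp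
  qed
  have left: "(\<integral>\<^sup>+s. ennreal ((m - s) powr \<alpha>) * indicator {m-1..<m} s \<partial>lborel) = ennreal (1 / (\<alpha>+1))"
  proof -
    have "(\<integral>\<^sup>+s. ennreal ((m - s) powr \<alpha>) * indicator {m-1..<m} s \<partial>lborel)
       = (\<integral>\<^sup>+s. ennreal ((m - (m + (-1) * s)) powr \<alpha>) * indicator {m-1..<m} (m + (-1) * s) \<partial>lborel)"
      by (subst nn_integral_real_affine[where c="-1" and t=m]) auto
    also have "\<dots> = (\<integral>\<^sup>+s. ennreal (s powr \<alpha>) * indicator {0..1} s \<partial>lborel)"
      by (intro nn_integral_cong_AE)
         (use AE_lborel_singleton[of 0] in \<open>eventually_elim, auto simp: indicator_def\<close>)
    finally show ?thesis using nn_integral_powr_atLeastAtMost_0[of \<alpha> 1] assms by simp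
  qed
  have "(\<integral>\<^sup>+s. ennreal (\<bar>s - m\<bar> powr \<alpha>) * indicator {m-1..m+1} s \<partial>lborel)
     = (\<integral>\<^sup>+s. ennreal ((s - m) powr \<alpha>) * indicator {m..m+1} s \<partial>lborel)
       + (\<integral>\<^sup>+s. ennreal ((m - s) powr \<alpha>) * indicator {m-1..<m} s \<partial>lborel)"
    unfolding split by (intro nn_integral_add) auto
  also have "\<dots> = ennreal (2 / (\<alpha>+1))" unfolding left right using assms
    by (subst ennreal_plus[symmetric]) (auto simp: field_simps)
  finally show ?thesis .
qed

lemma nn_integral_abs_cos_powr_le:
  fixes \<alpha> :: real assumes "\<alpha> > -1" "\<alpha> \<le> 0"
  shows "(\<integral>\<^sup>+t. ennreal (\<bar>cos (2*pi*t)\<bar> powr \<alpha>) * indicator {0..1} t \<partial>lborel) \<le> ennreal (4 / (\<alpha>+1))"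
proof -
  have "(\<integral>\<^sup>+t. ennreal (\<bar>cos (2*pi*t)\<bar> powr \<alpha>) * indicator {0..1} t \<partial>lborel)
     \<le> (\<integral>\<^sup>+t. ennreal (\<bar>t - 1/4\<bar> powr \<alpha>) * indicator {1/4-1..1/4+1} t
            + ennreal (\<bar>t - 3/4\<bar> powr \<alpha>) * indicator {3/4-1..3/4+1} t \<partial>lborel)"
  proof (rule nn_integral_mono_AE)
    show "AE t in lborel. ennreal (\<bar>cos (2*pi*t)\<bar> powr \<alpha>) * indicator {0..1} t
      \<le> ennreal (\<bar>t - 1/4\<bar> powr \<alpha>) * indicator {1/4-1..1/4+1} t
            + ennreal (\<bar>t - 3/4\<bar> powr \<alpha>) * indicator {3/4-1..3/4+1} t"
      using AE_lborel_singleton[of "1/4"] AE_lborel_singleton[of "3/4"]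
    proof eventually_elim
      case (elim t)
      show ?case
      proof (cases "t \<in> {0..1}")
        case True
        define d where "d = min \<bar>t - 1/4\<bar> \<bar>t - 3/4\<bar>"
        have "d > 0" using elim by (auto simp: d_def)
        then have "\<bar>cos (2*pi*t)\<bar> powr \<alpha> \<le> d powr \<alpha>"
          using powr_mono2'[OF assms(2)] abs_cos_2pi_ge_min_dist[of t] True by (auto simp: d_def)
        also have "d powr \<alpha> \<le> \<bar>t - 1/4\<bar> powr \<alpha> + \<bar>t - 3/4\<bar> powr \<alpha>"
          by (auto simp: d_def min_def)
        finally show ?thesis
          using True by (auto simp: indicator_def ennreal_plus[symmetric] simp del: ennreal_plus)
      qed (auto simp: indicator_def)
    qed
  qed
  also have "\<dots> = (\<integral>\<^sup>+t. ennreal (\<bar>t - 1/4\<bar> powr \<alpha>) * indicator {1/4-1..1/4+1} t \<partial>lborel)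
      + (\<integral>\<^sup>+t. ennreal (\<bar>t - 3/4\<bar> powr \<alpha>) * indicator {3/4-1..3/4+1} t \<partial>lborel)"
    by (intro nn_integral_add) auto
  also have "\<dots> = ennreal (2 / (\<alpha>+1)) + ennreal (2 / (\<alpha>+1))"
    using nn_integral_abs_powr_centered[OF assms(1), of "1/4"]
      nn_integral_abs_powr_centered[OF assms(1), of "3/4"] by simp
  also have "\<dots> = ennreal (2 / (\<alpha>+1) + 2 / (\<alpha>+1))"
    using assms by (subst ennreal_plus) auto
  also have "(2::real) / (\<alpha>+1) + 2 / (\<alpha>+1) = 4 / (\<alpha>+1)"
    by (simp add: add_divide_distrib[symmetric])
  finally show ?thesis .
qed

section \<open>The strip weight seen from an annulus\<close>

definition strip_weight :: "real \<Rightarrow> real \<Rightarrow> real \<Rightarrow> real" where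
  "strip_weight \<alpha> c x = (if c < x \<and> x < 2*c then (x - c) powr \<alpha> else 0)"

lemma strip_weight_nonneg: "strip_weight \<alpha> c x \<ge> 0"
  by (simp add: strip_weight_def)

lemma borel_measurable_strip_weight [measurable]: "strip_weight \<alpha> c \<in> borel_measurable borel"
  unfolding strip_weight_def by measurable

lemma nn_integral_strip_weight_along_line_le:
  fixes \<alpha> c X \<kappa> :: real assumes "\<alpha> > -1" "\<alpha> \<le> 0" "c > 0" "\<kappa> \<noteq> 0"
  shows "(\<integral>\<^sup>+r. ennreal (strip_weight \<alpha> c (X - r*\<kappa>)) * indicator {c/4..c/2} r \<partial>lborel)
     \<le> ennreal ((c/4) powr (\<alpha>+1) / (\<alpha>+1) * \<bar>\<kappa>\<bar> powr \<alpha>)"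
proof -
  define s0 where "s0 = X - c - (if \<kappa> > 0 then \<kappa>*c/2 else \<kappa>*c/4)"
  define L where "L = \<bar>\<kappa>\<bar> * (c/4)"
  have "L \<ge> 0" using assms by (simp add: L_def)
  define G where "G s = ennreal (s powr \<alpha>) * indicator {0<..} s * indicator {s0..s0+L} s" for s
  have [measurable]: "G \<in> borel_measurable borel" unfolding G_def by measurable
  have "(\<integral>\<^sup>+r. ennreal (strip_weight \<alpha> c (X - r*\<kappa>)) * indicator {c/4..c/2} r \<partial>lborel)
      \<le> (\<integral>\<^sup>+r. G ((X - c) + (-\<kappa>) * r) \<partial>lborel)"
  proof (intro nn_integral_mono)
    fix r
    show "ennreal (strip_weight \<alpha> c (X - r*\<kappa>)) * indicator {c/4..c/2} r \<le> G ((X - c) + (-\<kappa>) * r)"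
    proof (cases "r \<in> {c/4..c/2} \<and> c < X - r*\<kappa> \<and> X - r*\<kappa> < 2*c")
      case True
      have "(X - c) + (-\<kappa>) * r \<in> {s0..s0+L}"
      proof (cases "\<kappa> > 0")
        case True
        then have "\<kappa> * r \<le> \<kappa> * (c/2)" "\<kappa> * (c/4) \<le> \<kappa> * r"
          using \<open>r \<in> {c/4..c/2} \<and> _\<close> by (auto intro: mult_left_mono)
        then show ?thesis using True by (auto simp: s0_def L_def algebra_simps)
      next
        case False
        then have "\<kappa> < 0" using assms by auto
        then have "\<kappa> * r \<ge> \<kappa> * (c/2)" "\<kappa> * (c/4) \<ge> \<kappa> * r"
          using \<open>r \<in> {c/4..c/2} \<and> _\<close> by (auto intro: mult_left_mono_neg)
        then show ?thesis using \<open>\<kappa> < 0\<close> by (auto simp: s0_def L_def algebra_simps)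
      qed
      then show ?thesis
        using True by (auto simp: G_def strip_weight_def indicator_def algebra_simps)
    qed (auto simp: G_def strip_weight_def indicator_def)
  qed
  also have "\<dots> = ennreal (1 / \<bar>\<kappa>\<bar>) * (\<integral>\<^sup>+s. G s \<partial>lborel)"
  proof -
    have "(\<integral>\<^sup>+s. G s \<partial>lborel) = ennreal \<bar>-\<kappa>\<bar> * (\<integral>\<^sup>+r. G ((X - c) + (-\<kappa>) * r) \<partial>lborel)"
      using assms by (intro nn_integral_real_affine) auto
    moreover have "ennreal (1 / \<bar>\<kappa>\<bar>) * ennreal \<bar>\<kappa>\<bar> = 1"
      using assms by (subst ennreal_mult[symmetric]) auto
    ultimately show ?thesis by (simp add: mult.assoc[symmetric])
  qed
  also have "\<dots> \<le> ennreal (1 / \<bar>\<kappa>\<bar>) * ennreal (L powr (\<alpha>+1) / (\<alpha>+1))"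
    unfolding G_def by (intro mult_left_mono nn_integral_powr_interval_le assms \<open>L \<ge> 0\<close>) auto
  also have "\<dots> = ennreal (1 / \<bar>\<kappa>\<bar> * (L powr (\<alpha>+1) / (\<alpha>+1)))"
    using assms by (subst ennreal_mult) auto
  also have "1 / \<bar>\<kappa>\<bar> * (L powr (\<alpha>+1) / (\<alpha>+1)) = (c/4) powr (\<alpha>+1) / (\<alpha>+1) * \<bar>\<kappa>\<bar> powr \<alpha>"
  proof -
    have "L powr (\<alpha>+1) = \<bar>\<kappa>\<bar> powr (\<alpha>+1) * (c/4) powr (\<alpha>+1)"
      unfolding L_def using assms by (subst powr_mult) auto
    also have "\<bar>\<kappa>\<bar> powr (\<alpha>+1) = \<bar>\<kappa>\<bar> powr \<alpha> * \<bar>\<kappa>\<bar>"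
      using assms by (simp add: powr_add)
    finally show ?thesis using assms by (simp add: field_simps)
  qed
  finally show ?thesis .
qed

text \<open>The mass of the strip weight met by the circles of radius \<open>r \<in> [c/4, c/2]\<close> around a point
  of real part \<open>X\<close>, in polar coordinates \<open>(r, t)\<close>.\<close>

definition annulus_weight :: "real \<Rightarrow> real \<Rightarrow> real \<Rightarrow> ennreal" where
  "annulus_weight \<alpha> c X = (\<integral>\<^sup>+r. \<integral>\<^sup>+t. indicator {c/4..c/2} r * indicator {0..1} t
                    * ennreal (strip_weight \<alpha> c (X - r * cos (2*pi*t))) \<partial>lborel \<partial>lborel)"

lemma annulus_weight_eq_0:
  assumes "c > 0" "X \<ge> 5*c/2"
  shows "annulus_weight \<alpha> c X = 0"
proof -
  have "indicator {c/4..c/2} r * indicator {0..1} t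
          * ennreal (strip_weight \<alpha> c (X - r * cos (2*pi*t))) = 0" for r t :: real
  proof (cases "r \<in> {c/4..c/2}")
    case True
    then have "r * cos (2*pi*t) \<le> r * 1" using assms by (intro mult_left_mono) auto
    moreover have "r \<le> c/2" using True by simp
    ultimately have "X - r * cos (2*pi*t) \<ge> 2*c" using assms by linarith
    then show ?thesis by (simp add: strip_weight_def)
  qed auto
  then show ?thesis unfolding annulus_weight_def by (simp del: mult_eq_0_iff)
qed

lemma annulus_weight_le:
  assumes "\<alpha> > -1" "\<alpha> \<le> 0" "c > 0"
  shows "annulus_weight \<alpha> c X \<le> ennreal ((c/4) powr (\<alpha>+1) / (\<alpha>+1) * (4 / (\<alpha>+1)))"
proof -
  define B where "B = (c/4) powr (\<alpha>+1) / (\<alpha>+1)"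
  have "B \<ge> 0" using assms by (simp add: B_def)
  have "annulus_weight \<alpha> c X = (\<integral>\<^sup>+t. \<integral>\<^sup>+r. indicator {c/4..c/2} r * indicator {0..1} t
                    * ennreal (strip_weight \<alpha> c (X - r * cos (2*pi*t))) \<partial>lborel \<partial>lborel)"
    unfolding annulus_weight_def by (rule lborel_pair.Fubini') measurable
  also have "\<dots> = (\<integral>\<^sup>+t. indicator {0..1} t * (\<integral>\<^sup>+r. ennreal (strip_weight \<alpha> c (X - r * cos (2*pi*t)))
                    * indicator {c/4..c/2} r \<partial>lborel) \<partial>lborel)"
    by (intro nn_integral_cong, subst nn_integral_cmult[symmetric])
       (auto intro!: nn_integral_cong simp: mult_ac)
  also have "\<dots> \<le> (\<integral>\<^sup>+t. ennreal B * (ennreal (\<bar>cos (2*pi*t)\<bar> powr \<alpha>) * indicator {0..1} t) \<partial>lborel)"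
  proof (rule nn_integral_mono_AE)
    show "AE t in lborel. indicator {0..1} t * (\<integral>\<^sup>+r. ennreal (strip_weight \<alpha> c (X - r * cos (2*pi*t)))
            * indicator {c/4..c/2} r \<partial>lborel)
       \<le> ennreal B * (ennreal (\<bar>cos (2*pi*t)\<bar> powr \<alpha>) * indicator {0..1} t)"
      using AE_cos_2pi_nonzero
    proof eventually_elim
      case (elim t)
      show ?case
      proof (cases "t \<in> {0..1}")
        case True
        then have "(\<integral>\<^sup>+r. ennreal (strip_weight \<alpha> c (X - r * cos (2*pi*t))) * indicator {c/4..c/2} r \<partial>lborel)
             \<le> ennreal B * ennreal (\<bar>cos (2*pi*t)\<bar> powr \<alpha>)"
          using nn_integral_strip_weight_along_line_le[OF assms, of "cos (2*pi*t)" X] elim \<open>B \<ge> 0\<close>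
          by (simp add: B_def ennreal_mult[symmetric])
        then show ?thesis using True by simp
      qed simp
    qed
  qed
  also have "\<dots> = ennreal B * (\<integral>\<^sup>+t. ennreal (\<bar>cos (2*pi*t)\<bar> powr \<alpha>) * indicator {0..1} t \<partial>lborel)"
    by (rule nn_integral_cmult) measurable
  also have "\<dots> \<le> ennreal B * ennreal (4 / (\<alpha>+1))"
    by (intro mult_left_mono nn_integral_abs_cos_powr_le assms) auto
  finally show ?thesis
    using \<open>B \<ge> 0\<close> assms by (simp add: B_def ennreal_mult[symmetric])
qed

lemma annulus_weight_le_powr:
  assumes "\<alpha> > -1" "\<alpha> \<le> 0" "c > 0" "X > 0"
  shows "ennreal (4/c) * annulus_weight \<alpha> c X \<le> ennreal (10 powr (-\<alpha>) * (4 / (\<alpha>+1)^2) * X powr \<alpha>)"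
proof (cases "X \<ge> 5*c/2")
  case True
  then show ?thesis using annulus_weight_eq_0 assms by simp
next
  case False
  have "ennreal (4/c) * annulus_weight \<alpha> c X
      \<le> ennreal (4/c) * ennreal ((c/4) powr (\<alpha>+1) / (\<alpha>+1) * (4 / (\<alpha>+1)))"
    by (intro mult_left_mono annulus_weight_le assms) auto
  also have "\<dots> = ennreal (4/c * ((c/4) powr (\<alpha>+1) / (\<alpha>+1) * (4 / (\<alpha>+1))))"
    using assms by (subst ennreal_mult) auto
  also have "4/c * ((c/4) powr (\<alpha>+1) / (\<alpha>+1) * (4 / (\<alpha>+1))) = (c/4) powr \<alpha> * (4 / (\<alpha>+1)^2)"
  proof -
    have "(c/4) powr (\<alpha>+1) = (c/4) powr \<alpha> * (c/4)" using assms by (simp add: powr_add)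
    then show ?thesis using assms by (simp add: power2_eq_square field_simps)
  qed
  also have "\<dots> \<le> ennreal (10 powr (-\<alpha>) * (4 / (\<alpha>+1)^2) * X powr \<alpha>)"
  proof (intro ennreal_leI)
    have "10 powr \<alpha> * (c/4) powr \<alpha> = (10 * (c/4)) powr \<alpha>"
      using powr_mult[of 10 "c/4" \<alpha>] assms by simp
    also have "\<dots> \<le> X powr \<alpha>" using False by (intro powr_mono2' assms) auto
    finally have "(c/4) powr \<alpha> \<le> 10 powr (-\<alpha>) * X powr \<alpha>"
      by (simp add: powr_minus field_simps)
    from mult_right_mono[OF this, of "4 / (\<alpha>+1)^2"]
    show "(c/4) powr \<alpha> * (4 / (\<alpha>+1)^2) \<le> 10 powr (-\<alpha>) * (4 / (\<alpha>+1)^2) * X powr \<alpha>"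
      by (simp add: mult_ac)
  qed
  finally show ?thesis .
qed

section \<open>The sub-mean-value estimate\<close>

lemma circle_mean_value:
  fixes h :: "complex \<Rightarrow> complex"
  assumes h: "h holomorphic_on cball u r" and r: "r > 0"
  shows "((\<lambda>t. h (circlepath u r t)) has_integral h u) {0..1}"
proof -
  have "((\<lambda>z. h z / (z - u)) has_contour_integral (2 * of_real pi * \<i> * h u)) (circlepath u r)"
    using Cauchy_integral_circlepath_simple[OF h] r by simp
  then have "((\<lambda>t. h (circlepath u r t) / (circlepath u r t - u)
                * vector_derivative (circlepath u r) (at t within {0..1}))
          has_integral (2 * of_real pi * \<i> * h u)) {0..1}"
    unfolding has_contour_integral_def .
  then have "((\<lambda>t. (2 * of_real pi * \<i>) * h (circlepath u r t)) has_integral (2 * of_real pi * \<i> * h u)) {0..1}"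
  proof (rule has_integral_eq[rotated])
    fix t :: real assume "t \<in> {0..1}"
    then have "vector_derivative (circlepath u r) (at t within {0..1})
        = 2 * pi * \<i> * r * exp (2 * of_real pi * \<i> * t)"
      by (intro vector_derivative_circlepath01) auto
    then show "h (circlepath u r t) / (circlepath u r t - u) * vector_derivative (circlepath u r) (at t within {0..1})
        = (2 * of_real pi * \<i>) * h (circlepath u r t)"
      using r by (simp add: circlepath field_simps)
  qed
  from has_integral_mult_right[OF this, of "inverse (2 * of_real pi * \<i>)"] show ?thesis
    by (simp add: field_simps)
qed

lemma norm_le_circle_mean:
  fixes h :: "complex \<Rightarrow> complex"
  assumes h: "h holomorphic_on cball u r" and r: "r > 0"
  shows "ennreal (cmod (h u))
    \<le> (\<integral>\<^sup>+t. ennreal (cmod (h (u + of_real r * cis (2*pi*t)))) * indicator {0..1} t \<partial>lborel)"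
proof -
  define F where "F t = h (u + of_real r * cis (2*pi*t))" for t
  have circ: "circlepath u r t = u + of_real r * cis (2*pi*t)" for t
    by (simp add: circlepath cis_conv_exp mult_ac)
  have "(F has_integral h u) {0..1}"
    using circle_mean_value[OF h r] unfolding F_def circ .
  moreover have "continuous_on {0..1} F"
    unfolding F_def using r
    by (intro continuous_on_compose2[OF holomorphic_on_imp_continuous_on[OF h]] continuous_intros)
       (auto simp: dist_norm norm_mult)
  then have "(\<lambda>t. cmod (F t)) integrable_on {0..1}"
    by (intro integrable_continuous_interval continuous_intros)
  ultimately have "cmod (h u) \<le> integral {0..1} (\<lambda>t. cmod (F t))"
    using integral_norm_bound_integral[OF has_integral_integrable] integral_unique by (metis order.refl)
  moreover have "(\<integral>\<^sup>+t. ennreal (cmod (F t)) * indicator {0..1} t \<partial>lborel)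
      = ennreal (integral {0..1} (\<lambda>t. cmod (F t)))"
    using \<open>(\<lambda>t. cmod (F t)) integrable_on {0..1}\<close>
    by (intro nn_integral_has_integral_lebesgue' integrable_integral) auto
  ultimately show ?thesis unfolding F_def by (simp add: ennreal_leI)
qed

lemma open_right_half_plane: "open right_half_plane"
  unfolding right_half_plane_def by (rule open_halfspace_Re_gt)

lemma connected_right_half_plane: "connected right_half_plane"
  unfolding right_half_plane_def by (intro convex_connected convex_halfspace_Re_gt)

text \<open>Functions on the half-plane are extended by \<open>0\<close> outside it, which makes them Borel measurable
  on all of \<open>\<complex>\<close> without changing any of the integrals below.\<close>

definition rhp_restrict :: "(complex \<Rightarrow> complex) \<Rightarrow> complex \<Rightarrow> complex" where
  "rhp_restrict f z = indicator right_half_plane z *\<^sub>R f z"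

lemma rhp_restrict_eq [simp]: "z \<in> right_half_plane \<Longrightarrow> rhp_restrict f z = f z"
  by (simp add: rhp_restrict_def)

lemma borel_measurable_cis [measurable]:
  "g \<in> borel_measurable M \<Longrightarrow> (\<lambda>x. cis (g x)) \<in> borel_measurable M"
  by (erule measurable_compose[OF _ borel_measurable_continuous_onI]) (intro continuous_intros)

lemma borel_measurable_rhp_restrict [measurable]:
  assumes "f holomorphic_on right_half_plane"
  shows "rhp_restrict f \<in> borel_measurable borel"
  unfolding rhp_restrict_def[abs_def] using open_right_half_plane assms
  by (intro borel_measurable_continuous_on_indicator holomorphic_on_imp_continuous_on) auto

lemma norm_sq_le_circle_mean:
  assumes hol: "f holomorphic_on right_half_plane" and r: "0 < r" "r < Re u"
  shows "ennreal ((cmod (f u))\<^sup>2)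
    \<le> (\<integral>\<^sup>+t. ennreal ((cmod (rhp_restrict f (u + of_real r * cis (2*pi*t))))\<^sup>2) * indicator {0..1} t \<partial>lborel)"
proof -
  have sub: "cball u r \<subseteq> right_half_plane"
  proof
    fix z assume "z \<in> cball u r"
    then have "\<bar>Re (u - z)\<bar> \<le> r"
      using abs_Re_le_cmod[of "u - z"] by (simp add: dist_norm)
    then show "z \<in> right_half_plane" using r by (auto simp: right_half_plane_def)
  qed
  have circ: "u + of_real r * cis (2*pi*t) \<in> right_half_plane" for t
    using sub r by (auto simp: dist_norm norm_mult)
  have "(\<lambda>z. f z ^ 2) holomorphic_on cball u r"
    using holomorphic_on_subset[OF hol sub] by (intro holomorphic_intros)
  from norm_le_circle_mean[OF this r(1)] show ?thesis
    by (simp add: circ norm_power)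
qed

lemma strip_weight_le_annulus_mean:
  assumes hol: "f holomorphic_on right_half_plane" and c: "c > 0"
  shows "ennreal ((cmod (rhp_restrict f u))\<^sup>2 * strip_weight \<alpha> c (Re u)) \<le> ennreal (4/c) *
    (\<integral>\<^sup>+r. \<integral>\<^sup>+t. indicator {c/4..c/2} r * indicator {0..1} t *
        ennreal ((cmod (rhp_restrict f (u + of_real r * cis (2*pi*t))))\<^sup>2 * strip_weight \<alpha> c (Re u)) \<partial>lborel \<partial>lborel)"
proof (cases "c < Re u \<and> Re u < 2*c")
  case False
  then have "strip_weight \<alpha> c (Re u) = 0" by (simp add: strip_weight_def)
  then show ?thesis by simp
next
  case True
  define W where "W = strip_weight \<alpha> c (Re u)"
  define M where "M = (cmod (rhp_restrict f u))\<^sup>2 * W"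
  have "W \<ge> 0" by (simp add: W_def strip_weight_nonneg)
  have u: "u \<in> right_half_plane" using True c by (simp add: right_half_plane_def)
  have inner: "indicator {c/4..c/2} r * ennreal M \<le> (\<integral>\<^sup>+t. indicator {c/4..c/2} r * indicator {0..1} t *
        ennreal ((cmod (rhp_restrict f (u + of_real r * cis (2*pi*t))))\<^sup>2 * W) \<partial>lborel)" for r
  proof (cases "r \<in> {c/4..c/2}")
    case r: True
    have "ennreal M = ennreal W * ennreal ((cmod (f u))\<^sup>2)"
      using u \<open>W \<ge> 0\<close> by (simp add: M_def ennreal_mult[symmetric] mult.commute)
    also have "\<dots> \<le> ennreal W * (\<integral>\<^sup>+t. ennreal ((cmod (rhp_restrict f (u + of_real r * cis (2*pi*t))))\<^sup>2)
                                    * indicator {0..1} t \<partial>lborel)"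
      using r c True by (intro mult_left_mono norm_sq_le_circle_mean[OF hol]) auto
    also have "\<dots> = (\<integral>\<^sup>+t. indicator {0..1} t *
        ennreal ((cmod (rhp_restrict f (u + of_real r * cis (2*pi*t))))\<^sup>2 * W) \<partial>lborel)"
      using \<open>W \<ge> 0\<close> hol
      by (subst nn_integral_cmult[symmetric]) (auto simp: ennreal_mult' mult_ac intro!: nn_integral_cong)
    finally show ?thesis using r by simp
  qed simp
  have "ennreal (4/c) * ennreal (c/4) = 1"
    using c by (simp add: ennreal_mult[symmetric])
  moreover have "(\<integral>\<^sup>+r. indicator {c/4..c/2} r * ennreal M \<partial>lborel) = ennreal M * ennreal (c/4)"
    using c by (simp add: nn_integral_cmult_indicator mult.commute[of _ "ennreal M"])
  ultimately have "ennreal M = ennreal (4/c) * (\<integral>\<^sup>+r. indicator {c/4..c/2} r * ennreal M \<partial>lborel)"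
    by (metis mult.commute mult.left_commute mult_1)
  also have "\<dots> \<le> ennreal (4/c) * (\<integral>\<^sup>+r. \<integral>\<^sup>+t. indicator {c/4..c/2} r * indicator {0..1} t *
        ennreal ((cmod (rhp_restrict f (u + of_real r * cis (2*pi*t))))\<^sup>2 * W) \<partial>lborel \<partial>lborel)"
    by (intro mult_left_mono nn_integral_mono inner) auto
  finally show ?thesis unfolding M_def W_def .
qed

lemma nn_integral_lborel_translate:
  fixes f :: "'a::euclidean_space \<Rightarrow> ennreal"
  assumes "f \<in> borel_measurable borel"
  shows "(\<integral>\<^sup>+x. f (z + x) \<partial>lborel) = (\<integral>\<^sup>+x. f x \<partial>lborel)"
  using assms by (subst lborel_distr_plus[symmetric, of z]) (simp add: nn_integral_distr)

lemma nn_integral_strip_weight_le_annulus_weight: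
  assumes hol: "f holomorphic_on right_half_plane" and c: "c > 0"
  shows "(\<integral>\<^sup>+u. ennreal ((cmod (rhp_restrict f u))\<^sup>2 * strip_weight \<alpha> c (Re u)) \<partial>lborel)
     \<le> ennreal (4/c) * (\<integral>\<^sup>+v. ennreal ((cmod (rhp_restrict f v))\<^sup>2) * annulus_weight \<alpha> c (Re v) \<partial>lborel)"
proof -
  note [measurable] = borel_measurable_rhp_restrict[OF hol]
  define H where "H u r t = indicator {c/4..c/2} r * indicator {0..1} t *
        ennreal ((cmod (rhp_restrict f (u + of_real r * cis (2*pi*t))))\<^sup>2 * strip_weight \<alpha> c (Re u))"
    for u r t
  define H' where "H' v r t = indicator {c/4..c/2} r * indicator {0..1} t *
        ennreal ((cmod (rhp_restrict f v))\<^sup>2 * strip_weight \<alpha> c (Re v - r * cos (2*pi*t)))" for v r t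
  have "(\<integral>\<^sup>+u. ennreal ((cmod (rhp_restrict f u))\<^sup>2 * strip_weight \<alpha> c (Re u)) \<partial>lborel)
      \<le> (\<integral>\<^sup>+u. ennreal (4/c) * (\<integral>\<^sup>+r. \<integral>\<^sup>+t. H u r t \<partial>lborel \<partial>lborel) \<partial>lborel)"
    unfolding H_def by (intro nn_integral_mono strip_weight_le_annulus_mean[OF hol c])
  also have "\<dots> = ennreal (4/c) * (\<integral>\<^sup>+u. \<integral>\<^sup>+r. \<integral>\<^sup>+t. H u r t \<partial>lborel \<partial>lborel \<partial>lborel)"
    by (rule nn_integral_cmult) (unfold H_def, measurable)
  also have "(\<integral>\<^sup>+u. \<integral>\<^sup>+r. \<integral>\<^sup>+t. H u r t \<partial>lborel \<partial>lborel \<partial>lborel)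
      = (\<integral>\<^sup>+r. \<integral>\<^sup>+u. \<integral>\<^sup>+t. H u r t \<partial>lborel \<partial>lborel \<partial>lborel)"
    by (rule lborel_pair.Fubini') (unfold H_def, measurable)
  also have "\<dots> = (\<integral>\<^sup>+r. \<integral>\<^sup>+t. \<integral>\<^sup>+u. H u r t \<partial>lborel \<partial>lborel \<partial>lborel)"
    by (intro nn_integral_cong lborel_pair.Fubini') (unfold H_def, measurable)
  also have "(\<integral>\<^sup>+r. \<integral>\<^sup>+t. \<integral>\<^sup>+u. H u r t \<partial>lborel \<partial>lborel \<partial>lborel)
      = (\<integral>\<^sup>+r. \<integral>\<^sup>+t. \<integral>\<^sup>+v. H' v r t \<partial>lborel \<partial>lborel \<partial>lborel)"
  proof (rule nn_integral_cong, rule nn_integral_cong)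
    fix r t :: real
    have "(\<integral>\<^sup>+u. H u r t \<partial>lborel) = (\<integral>\<^sup>+u. H' (of_real r * cis (2*pi*t) + u) r t \<partial>lborel)"
      by (intro nn_integral_cong) (simp add: H_def H'_def add.commute)
    also have "\<dots> = (\<integral>\<^sup>+v. H' v r t \<partial>lborel)"
      by (rule nn_integral_lborel_translate) (unfold H'_def, measurable)
    finally show "(\<integral>\<^sup>+u. H u r t \<partial>lborel) = (\<integral>\<^sup>+v. H' v r t \<partial>lborel)" .
  qed
  also have "\<dots> = (\<integral>\<^sup>+r. \<integral>\<^sup>+v. \<integral>\<^sup>+t. H' v r t \<partial>lborel \<partial>lborel \<partial>lborel)"
    by (intro nn_integral_cong lborel_pair.Fubini'[symmetric]) (unfold H'_def, measurable)
  also have "\<dots> = (\<integral>\<^sup>+v. \<integral>\<^sup>+r. \<integral>\<^sup>+t. H' v r t \<partial>lborel \<partial>lborel \<partial>lborel)"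
    by (rule lborel_pair.Fubini'[symmetric]) (unfold H'_def, measurable)
  also have "\<dots> = (\<integral>\<^sup>+v. ennreal ((cmod (rhp_restrict f v))\<^sup>2) * annulus_weight \<alpha> c (Re v) \<partial>lborel)"
  proof (intro nn_integral_cong)
    fix v
    have "(\<integral>\<^sup>+r. \<integral>\<^sup>+t. H' v r t \<partial>lborel \<partial>lborel)
        = (\<integral>\<^sup>+r. ennreal ((cmod (rhp_restrict f v))\<^sup>2) * (\<integral>\<^sup>+t. indicator {c/4..c/2} r * indicator {0..1} t
                    * ennreal (strip_weight \<alpha> c (Re v - r * cos (2*pi*t))) \<partial>lborel) \<partial>lborel)"
      by (intro nn_integral_cong, subst nn_integral_cmult[symmetric])
         (auto simp: H'_def ennreal_mult' strip_weight_nonneg mult_ac intro!: nn_integral_cong)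
    also have "\<dots> = ennreal ((cmod (rhp_restrict f v))\<^sup>2) * annulus_weight \<alpha> c (Re v)"
      unfolding annulus_weight_def by (rule nn_integral_cmult) measurable
    finally show "(\<integral>\<^sup>+r. \<integral>\<^sup>+t. H' v r t \<partial>lborel \<partial>lborel)
        = ennreal ((cmod (rhp_restrict f v))\<^sup>2) * annulus_weight \<alpha> c (Re v)" .
  qed
  finally show ?thesis .
qed

section \<open>Translations are bounded\<close>

definition shifted_bergman_integral :: "real \<Rightarrow> (complex \<Rightarrow> complex) \<Rightarrow> real \<Rightarrow> ennreal" where
  "shifted_bergman_integral \<alpha> f c =
     (\<integral>\<^sup>+u. ennreal ((cmod (rhp_restrict f u))\<^sup>2 * (Re u - c) powr \<alpha>) * indicator {u. Re u > c} u \<partial>lborel)"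

lemma shifted_bergman_integral_0:
  "shifted_bergman_integral \<alpha> f 0 =
     (\<integral>\<^sup>+v. ennreal ((cmod (rhp_restrict f v))\<^sup>2 * Re v powr \<alpha>) * indicator right_half_plane v \<partial>lborel)"
  by (simp add: shifted_bergman_integral_def right_half_plane_def)

lemma nn_integral_strip_weight_le:
  assumes hol: "f holomorphic_on right_half_plane" and c: "c > 0" and \<alpha>: "\<alpha> > -1" "\<alpha> \<le> 0"
  shows "(\<integral>\<^sup>+u. ennreal ((cmod (rhp_restrict f u))\<^sup>2 * strip_weight \<alpha> c (Re u)) \<partial>lborel)
     \<le> ennreal (10 powr (-\<alpha>) * (4 / (\<alpha>+1)^2)) * shifted_bergman_integral \<alpha> f 0"
proof -
  define K where "K = 10 powr (-\<alpha>) * (4 / (\<alpha>+1)^2)"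
  have "K \<ge> 0" by (simp add: K_def)
  note [measurable] = borel_measurable_rhp_restrict[OF hol]
  have "(\<integral>\<^sup>+u. ennreal ((cmod (rhp_restrict f u))\<^sup>2 * strip_weight \<alpha> c (Re u)) \<partial>lborel)
      \<le> ennreal (4/c) * (\<integral>\<^sup>+v. ennreal ((cmod (rhp_restrict f v))\<^sup>2) * annulus_weight \<alpha> c (Re v) \<partial>lborel)"
    by (rule nn_integral_strip_weight_le_annulus_weight[OF hol c])
  also have "\<dots> = (\<integral>\<^sup>+v. ennreal ((cmod (rhp_restrict f v))\<^sup>2) * (ennreal (4/c) * annulus_weight \<alpha> c (Re v)) \<partial>lborel)"
    by (subst nn_integral_cmult[symmetric]) (auto simp: annulus_weight_def mult_ac)
  also have "\<dots> \<le> (\<integral>\<^sup>+v. ennreal K * (ennreal ((cmod (rhp_restrict f v))\<^sup>2 * Re v powr \<alpha>)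
                        * indicator right_half_plane v) \<partial>lborel)"
  proof (intro nn_integral_mono)
    fix v
    show "ennreal ((cmod (rhp_restrict f v))\<^sup>2) * (ennreal (4/c) * annulus_weight \<alpha> c (Re v))
        \<le> ennreal K * (ennreal ((cmod (rhp_restrict f v))\<^sup>2 * Re v powr \<alpha>) * indicator right_half_plane v)"
    proof (cases "Re v > 0")
      case True
      have "ennreal ((cmod (rhp_restrict f v))\<^sup>2) * (ennreal (4/c) * annulus_weight \<alpha> c (Re v))
          \<le> ennreal ((cmod (rhp_restrict f v))\<^sup>2) * ennreal (K * Re v powr \<alpha>)"
        unfolding K_def by (intro mult_left_mono annulus_weight_le_powr \<alpha> c True) auto
      then show ?thesis
        using True \<open>K \<ge> 0\<close> by (simp add: right_half_plane_def ennreal_mult'[symmetric] mult_ac)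
    qed (simp add: rhp_restrict_def right_half_plane_def)
  qed
  also have "\<dots> = ennreal K * shifted_bergman_integral \<alpha> f 0"
    unfolding shifted_bergman_integral_0 by (rule nn_integral_cmult) (unfold right_half_plane_def, measurable)
  finally show ?thesis unfolding K_def .
qed

lemma shifted_bergman_integral_le_nonneg_exponent:
  assumes "\<alpha> \<ge> 0" "c \<ge> 0"
  shows "shifted_bergman_integral \<alpha> f c \<le> shifted_bergman_integral \<alpha> f 0"
  unfolding shifted_bergman_integral_def
proof (intro nn_integral_mono)
  fix u :: complex
  have "(cmod (rhp_restrict f u))\<^sup>2 * (Re u - c) powr \<alpha> \<le> (cmod (rhp_restrict f u))\<^sup>2 * Re u powr \<alpha>"
    if "Re u > c" using that assms by (intro mult_left_mono powr_mono2) auto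
  then show "ennreal ((cmod (rhp_restrict f u))\<^sup>2 * (Re u - c) powr \<alpha>) * indicator {u. Re u > c} u
      \<le> ennreal ((cmod (rhp_restrict f u))\<^sup>2 * (Re u - 0) powr \<alpha>) * indicator {u. Re u > 0} u"
    using assms by (auto simp: indicator_def ennreal_leI)
qed

lemma shifted_weight_le:
  assumes "\<alpha> \<le> 0" "c > 0"
  shows "ennreal ((cmod (rhp_restrict f u))\<^sup>2 * (Re u - c) powr \<alpha>) * indicator {u. Re u > c} u
    \<le> ennreal ((cmod (rhp_restrict f u))\<^sup>2 * strip_weight \<alpha> c (Re u))
      + ennreal (2 powr (-\<alpha>)) * (ennreal ((cmod (rhp_restrict f u))\<^sup>2 * Re u powr \<alpha>) * indicator right_half_plane u)"
proof (cases "Re u \<ge> 2*c")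
  case True
  have "(Re u - c) powr \<alpha> \<le> (Re u / 2) powr \<alpha>"
    using True assms by (intro powr_mono2') auto
  also have "(Re u / 2) powr \<alpha> = 2 powr (-\<alpha>) * Re u powr \<alpha>"
    using True assms by (simp add: powr_divide powr_minus divide_simps)
  finally have "(cmod (rhp_restrict f u))\<^sup>2 * (Re u - c) powr \<alpha>
      \<le> (cmod (rhp_restrict f u))\<^sup>2 * (2 powr (-\<alpha>) * Re u powr \<alpha>)"
    by (rule mult_left_mono) simp
  then have "ennreal ((cmod (rhp_restrict f u))\<^sup>2 * (Re u - c) powr \<alpha>)
      \<le> ennreal (2 powr (-\<alpha>)) * ennreal ((cmod (rhp_restrict f u))\<^sup>2 * Re u powr \<alpha>)"
    by (simp add: ennreal_mult'[symmetric] ennreal_leI mult_ac)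
  moreover have "u \<in> right_half_plane" using True assms by (simp add: right_half_plane_def)
  ultimately show ?thesis using True assms by (simp add: add_increasing)
next
  case False
  then show ?thesis by (simp add: strip_weight_def indicator_def)
qed

lemma shifted_bergman_integral_le_neg_exponent:
  assumes hol: "f holomorphic_on right_half_plane" and \<alpha>: "\<alpha> > -1" "\<alpha> \<le> 0" and c: "c > 0"
  shows "shifted_bergman_integral \<alpha> f c
    \<le> ennreal (2 powr (-\<alpha>) + 10 powr (-\<alpha>) * (4 / (\<alpha>+1)^2)) * shifted_bergman_integral \<alpha> f 0"
proof -
  note [measurable] = borel_measurable_rhp_restrict[OF hol]
  have "shifted_bergman_integral \<alpha> f c
      \<le> (\<integral>\<^sup>+u. ennreal ((cmod (rhp_restrict f u))\<^sup>2 * strip_weight \<alpha> c (Re u))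
        + ennreal (2 powr (-\<alpha>)) * (ennreal ((cmod (rhp_restrict f u))\<^sup>2 * Re u powr \<alpha>)
            * indicator right_half_plane u) \<partial>lborel)"
    unfolding shifted_bergman_integral_def using \<alpha> c by (intro nn_integral_mono shifted_weight_le)
  also have "\<dots> = (\<integral>\<^sup>+u. ennreal ((cmod (rhp_restrict f u))\<^sup>2 * strip_weight \<alpha> c (Re u)) \<partial>lborel)
      + ennreal (2 powr (-\<alpha>)) * shifted_bergman_integral \<alpha> f 0"
  proof -
    have m1: "(\<lambda>u. ennreal ((cmod (rhp_restrict f u))\<^sup>2 * Re u powr \<alpha>) * indicator right_half_plane u)
        \<in> borel_measurable lborel"
      unfolding right_half_plane_def by measurable
    have m2: "(\<lambda>u. ennreal ((cmod (rhp_restrict f u))\<^sup>2 * strip_weight \<alpha> c (Re u))) \<in> borel_measurable lborel"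
      by measurable
    show ?thesis unfolding shifted_bergman_integral_0
      using nn_integral_add[OF m2 borel_measurable_times_ennreal[OF borel_measurable_const m1]]
        nn_integral_cmult[OF m1, of "ennreal (2 powr (-\<alpha>))"] by simp
  qed
  also have "\<dots> \<le> ennreal (10 powr (-\<alpha>) * (4 / (\<alpha>+1)^2)) * shifted_bergman_integral \<alpha> f 0
      + ennreal (2 powr (-\<alpha>)) * shifted_bergman_integral \<alpha> f 0"
    by (intro add_mono nn_integral_strip_weight_le hol c \<alpha> order.refl)
  finally show ?thesis
    by (simp add: distrib_right[symmetric] ennreal_plus[symmetric] add.commute del: ennreal_plus)
qed

lemma shifted_bergman_integral_bounded:
  assumes "f holomorphic_on right_half_plane" "\<alpha> > -1"
  obtains K where "K \<ge> 0"
    "\<And>c. c \<ge> 0 \<Longrightarrow> shifted_bergman_integral \<alpha> f c \<le> ennreal K * shifted_bergman_integral \<alpha> f 0"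
proof (cases "\<alpha> \<ge> 0")
  case True
  then show ?thesis
    using that[of 1] shifted_bergman_integral_le_nonneg_exponent by simp
next
  case False
  define K where "K = 2 powr (-\<alpha>) + 10 powr (-\<alpha>) * (4 / (\<alpha>+1)^2)"
  have "1 \<le> K" using False ge_one_powr_ge_zero[of 2 "-\<alpha>"] by (simp add: K_def add_increasing2)
  have "shifted_bergman_integral \<alpha> f c \<le> ennreal K * shifted_bergman_integral \<alpha> f 0" if "c \<ge> 0" for c
  proof (cases "c = 0")
    case True
    then show ?thesis using \<open>1 \<le> K\<close> mult_right_mono[of 1 "ennreal K"] by simp
  next
    case False
    then show ?thesis unfolding K_def
      using \<open>\<not> \<alpha> \<ge> 0\<close> that assms by (intro shifted_bergman_integral_le_neg_exponent) auto
  qed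
  moreover have "K \<ge> 0" using \<open>1 \<le> K\<close> by simp
  ultimately show ?thesis using that by blast
qed

section \<open>Orbits of affine composition operators\<close>

definition iterate_offset :: "real \<Rightarrow> complex \<Rightarrow> nat \<Rightarrow> complex" where
  "iterate_offset a b n = of_real (\<Sum>k<n. a^k) * b"

lemma comp_op_affine_power:
  "(comp_op (\<lambda>w. complex_of_real a * w + b) ^^ n) f
     = (\<lambda>w. f (complex_of_real (a^n) * w + iterate_offset a b n))"
proof (induction n)
  case 0
  then show ?case by (simp add: iterate_offset_def)
next
  case (Suc n)
  then show ?case
    by (auto simp: comp_op_def iterate_offset_def algebra_simps)
qed

lemma Re_iterate_offset_nonneg: "a \<ge> 0 \<Longrightarrow> Re b \<ge> 0 \<Longrightarrow> Re (iterate_offset a b n) \<ge> 0"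
  by (simp add: iterate_offset_def sum_nonneg)

lemma Re_iterate_offset_le:
  assumes "0 \<le> a" "a < 1" "Re b \<ge> 0"
  shows "Re (iterate_offset a b n) \<le> Re b / (1 - a)"
proof -
  have "(\<Sum>k<n. a^k) = (1 - a^n) / (1 - a)" using assms by (simp add: sum_gp_strict)
  also have "\<dots> \<le> 1 / (1 - a)" using assms by (intro divide_right_mono) auto
  finally have "(\<Sum>k<n. a^k) * Re b \<le> 1 / (1 - a) * Re b"
    using assms(3) by (rule mult_right_mono)
  then show ?thesis by (simp add: iterate_offset_def)
qed

lemma shifted_integrand_comp_affine:
  fixes g :: "complex \<Rightarrow> complex"
  assumes A: "A > 0" and B: "Re B \<ge> 0"
  shows "ennreal (\<bar>A\<bar> ^ DIM(complex)) * (ennreal ((cmod (g (B + A *\<^sub>R z)))\<^sup>2 * (Re (B + A *\<^sub>R z) - Re B) powr \<alpha>)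
           * indicator {u. Re u > Re B} (B + A *\<^sub>R z))
       = ennreal (A powr (2+\<alpha>)) * (ennreal ((cmod (g (complex_of_real A * z + B)))\<^sup>2 * Re z powr \<alpha>)
           * indicator right_half_plane z)"
proof (cases "Re z > 0")
  case True
  have "B + A *\<^sub>R z = complex_of_real A * z + B" by (simp add: scaleR_conv_of_real add.commute)
  moreover have "(A * Re z) powr \<alpha> = A powr \<alpha> * Re z powr \<alpha>" using A True by (simp add: powr_mult)
  moreover have "A powr (2+\<alpha>) = A^2 * A powr \<alpha>" using A by (simp add: powr_add)
  ultimately show ?thesis using True A
    by (simp add: right_half_plane_def ennreal_mult'[symmetric] mult_ac add.commute)
next
  case False
  then have "\<not> Re (B + A *\<^sub>R z) > Re B" using A by (simp add: zero_less_mult_iff)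
  then show ?thesis using False by (simp add: right_half_plane_def)
qed

lemma nn_integral_comp_affine:
  assumes hol: "f holomorphic_on right_half_plane" and A: "A > 0" and B: "Re B \<ge> 0"
  shows "(\<integral>\<^sup>+z. ennreal ((cmod (f (complex_of_real A * z + B)))\<^sup>2 * Re z powr \<alpha>) * indicator right_half_plane z \<partial>lborel)
       = ennreal (A powr (-2-\<alpha>)) * shifted_bergman_integral \<alpha> f (Re B)"
proof -
  note [measurable] = borel_measurable_rhp_restrict[OF hol]
  define F where "F u = ennreal ((cmod (rhp_restrict f u))\<^sup>2 * (Re u - Re B) powr \<alpha>) * indicator {u. Re u > Re B} u" for u
  have [measurable]: "F \<in> borel_measurable borel" unfolding F_def by measurable
  define L where "L = (\<integral>\<^sup>+z. ennreal ((cmod (f (complex_of_real A * z + B)))\<^sup>2 * Re z powr \<alpha>)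
                          * indicator right_half_plane z \<partial>lborel)"
  have "shifted_bergman_integral \<alpha> f (Re B) = (\<integral>\<^sup>+u. F u \<partial>lborel)"
    by (simp add: shifted_bergman_integral_def F_def)
  also have "\<dots> = (\<integral>\<^sup>+u. F u \<partial>density (distr lborel borel (\<lambda>x. B + A *\<^sub>R x)) (\<lambda>_. ennreal (\<bar>A\<bar> ^ DIM(complex))))"
    using lborel_affine[of A B] A by simp
  also have "\<dots> = (\<integral>\<^sup>+z. ennreal (\<bar>A\<bar> ^ DIM(complex)) * F (B + A *\<^sub>R z) \<partial>lborel)"
    by (subst nn_integral_density, simp, simp, subst nn_integral_distr) auto
  also have "\<dots> = (\<integral>\<^sup>+z. ennreal (A powr (2+\<alpha>)) * (ennreal ((cmod (rhp_restrict f (complex_of_real A * z + B)))\<^sup>2 * Re z powr \<alpha>)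
                          * indicator right_half_plane z) \<partial>lborel)"
    unfolding F_def by (intro nn_integral_cong shifted_integrand_comp_affine A B)
  also have "\<dots> = ennreal (A powr (2+\<alpha>)) * (\<integral>\<^sup>+z. ennreal ((cmod (rhp_restrict f (complex_of_real A * z + B)))\<^sup>2
                          * Re z powr \<alpha>) * indicator right_half_plane z \<partial>lborel)"
    by (intro nn_integral_cmult) (unfold right_half_plane_def, measurable)
  also have "(\<integral>\<^sup>+z. ennreal ((cmod (rhp_restrict f (complex_of_real A * z + B)))\<^sup>2 * Re z powr \<alpha>)
                * indicator right_half_plane z \<partial>lborel) = L"
    unfolding L_def using A B
    by (intro nn_integral_cong) (auto simp: indicator_def right_half_plane_def add_pos_nonneg)
  finally have "shifted_bergman_integral \<alpha> f (Re B) = ennreal (A powr (2+\<alpha>)) * L" .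
  moreover have "ennreal (A powr (-2-\<alpha>)) * ennreal (A powr (2+\<alpha>)) = 1"
    using A by (simp add: ennreal_mult[symmetric] powr_add[symmetric])
  ultimately show ?thesis
    by (simp add: L_def mult.assoc[symmetric])
qed

lemma bergman_norm_sq_comp_affine_power:
  assumes "f holomorphic_on right_half_plane" "a > 0" "Re b \<ge> 0"
  shows "bergman_norm_sq \<alpha> ((comp_op (\<lambda>w. complex_of_real a * w + b) ^^ n) f)
       = ennreal (1/pi) * (ennreal ((a^n) powr (-2-\<alpha>)) * shifted_bergman_integral \<alpha> f (Re (iterate_offset a b n)))"
  unfolding comp_op_affine_power bergman_norm_sq_def
  using nn_integral_comp_affine[OF assms(1), of "a^n" "iterate_offset a b n" \<alpha>] assms
    Re_iterate_offset_nonneg[of a b n] by simp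

lemma bergman_norm_sq_eq_shifted_bergman_integral:
  assumes "f holomorphic_on right_half_plane"
  shows "bergman_norm_sq \<alpha> f = ennreal (1/pi) * shifted_bergman_integral \<alpha> f 0"
  using bergman_norm_sq_comp_affine_power[OF assms, of 1 0 \<alpha> 0] by (simp add: iterate_offset_def)

lemma bergman_norm_sq_comp_affine_power_le:
  assumes "f holomorphic_on right_half_plane" "\<alpha> > -1" "a > 0" "Re b \<ge> 0"
  obtains K where "K \<ge> 0" "\<And>n. bergman_norm_sq \<alpha> ((comp_op (\<lambda>w. complex_of_real a * w + b) ^^ n) f)
      \<le> ennreal ((a^n) powr (-2-\<alpha>)) * (ennreal K * bergman_norm_sq \<alpha> f)"
proof -
  obtain K where "K \<ge> 0" and K: "\<And>c. c \<ge> 0 \<Longrightarrow>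
      shifted_bergman_integral \<alpha> f c \<le> ennreal K * shifted_bergman_integral \<alpha> f 0"
    using shifted_bergman_integral_bounded[OF assms(1,2)] by blast
  have "bergman_norm_sq \<alpha> ((comp_op (\<lambda>w. complex_of_real a * w + b) ^^ n) f)
      \<le> ennreal ((a^n) powr (-2-\<alpha>)) * (ennreal K * bergman_norm_sq \<alpha> f)" for n
  proof -
    have "bergman_norm_sq \<alpha> ((comp_op (\<lambda>w. complex_of_real a * w + b) ^^ n) f)
        = ennreal (1/pi) * (ennreal ((a^n) powr (-2-\<alpha>)) * shifted_bergman_integral \<alpha> f (Re (iterate_offset a b n)))"
      by (rule bergman_norm_sq_comp_affine_power[OF assms(1,3,4)])
    also have "\<dots> \<le> ennreal (1/pi) * (ennreal ((a^n) powr (-2-\<alpha>)) * (ennreal K * shifted_bergman_integral \<alpha> f 0))"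
      using assms by (intro mult_left_mono K Re_iterate_offset_nonneg) auto
    also have "\<dots> = ennreal ((a^n) powr (-2-\<alpha>)) * (ennreal K * bergman_norm_sq \<alpha> f)"
      by (simp add: bergman_norm_sq_eq_shifted_bergman_integral[OF assms(1)] mult_ac)
    finally show ?thesis .
  qed
  with \<open>K \<ge> 0\<close> show ?thesis by (rule that)
qed

lemma bergman_norm_sq_comp_affine_power_finite:
  assumes "f \<in> bergman_space \<alpha>" "\<alpha> > -1" "a > 0" "Re b \<ge> 0"
  shows "bergman_norm_sq \<alpha> ((comp_op (\<lambda>w. complex_of_real a * w + b) ^^ n) f) < \<infinity>"
proof -
  have "f holomorphic_on right_half_plane" "bergman_norm_sq \<alpha> f < \<infinity>"
    using assms(1) by (auto simp: bergman_space_def)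
  obtain K where "K \<ge> 0" and K: "\<And>n. bergman_norm_sq \<alpha> ((comp_op (\<lambda>w. complex_of_real a * w + b) ^^ n) f)
      \<le> ennreal ((a^n) powr (-2-\<alpha>)) * (ennreal K * bergman_norm_sq \<alpha> f)"
    using bergman_norm_sq_comp_affine_power_le[OF \<open>f holomorphic_on right_half_plane\<close> assms(2-4)] by blast
  have "bergman_norm_sq \<alpha> ((comp_op (\<lambda>w. complex_of_real a * w + b) ^^ n) f)
      \<le> ennreal ((a^n) powr (-2-\<alpha>)) * (ennreal K * bergman_norm_sq \<alpha> f)"
    by (rule K)
  also have "\<dots> < \<infinity>"
    using \<open>bergman_norm_sq \<alpha> f < \<infinity>\<close> by (simp add: ennreal_mult_less_top)
  finally show ?thesis .
qed

lemma bergman_norm_comp_affine_power_bounded: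
  assumes "f \<in> bergman_space \<alpha>" "\<alpha> > -1" "a \<ge> 1" "Re b \<ge> 0"
  shows "\<exists>B. \<forall>n. bergman_norm \<alpha> ((comp_op (\<lambda>w. complex_of_real a * w + b) ^^ n) f) \<le> B"
proof -
  have hol: "f holomorphic_on right_half_plane" and fin: "bergman_norm_sq \<alpha> f < \<infinity>"
    using assms(1) by (auto simp: bergman_space_def)
  have "a > 0" using assms(3) by simp
  obtain K where "K \<ge> 0" and K: "\<And>n. bergman_norm_sq \<alpha> ((comp_op (\<lambda>w. complex_of_real a * w + b) ^^ n) f)
      \<le> ennreal ((a^n) powr (-2-\<alpha>)) * (ennreal K * bergman_norm_sq \<alpha> f)"
    using bergman_norm_sq_comp_affine_power_le[OF hol assms(2) \<open>a > 0\<close> assms(4)] by blast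
  have "bergman_norm_sq \<alpha> ((comp_op (\<lambda>w. complex_of_real a * w + b) ^^ n) f) \<le> ennreal K * bergman_norm_sq \<alpha> f" for n
  proof -
    have "(a^n) powr (-2-\<alpha>) \<le> 1 powr (-2-\<alpha>)"
      using assms by (intro powr_mono2') auto
    then have "ennreal ((a^n) powr (-2-\<alpha>)) * (ennreal K * bergman_norm_sq \<alpha> f) \<le> 1 * (ennreal K * bergman_norm_sq \<alpha> f)"
      by (intro mult_right_mono) auto
    then show ?thesis using K[of n] by simp
  qed
  then have "bergman_norm \<alpha> ((comp_op (\<lambda>w. complex_of_real a * w + b) ^^ n) f)
      \<le> sqrt (enn2real (ennreal K * bergman_norm_sq \<alpha> f))" for n
    unfolding bergman_norm_def using fin
    by (intro real_sqrt_le_mono enn2real_mono) (auto simp: ennreal_mult_less_top)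
  then show ?thesis by blast
qed

lemma bergman_norm_comp_affine_power_eq_0:
  assumes "\<forall>z\<in>right_half_plane. f z = 0" "a > 0" "Re b \<ge> 0"
  shows "bergman_norm \<alpha> ((comp_op (\<lambda>w. complex_of_real a * w + b) ^^ n) f) = 0"
proof -
  have "complex_of_real (a^n) * z + iterate_offset a b n \<in> right_half_plane" if "z \<in> right_half_plane" for z
    using that assms Re_iterate_offset_nonneg[of a b n] by (simp add: right_half_plane_def add_pos_nonneg)
  then have "ennreal ((cmod (f (complex_of_real (a^n) * z + iterate_offset a b n)))\<^sup>2 * Re z powr \<alpha>)
      * indicator right_half_plane z = 0" for z
    using assms(1) by (cases "z \<in> right_half_plane") auto
  then show ?thesis
    by (simp only: bergman_norm_def bergman_norm_sq_def comp_op_affine_power) simp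
qed

lemma continuous_on_eq_0_if_AE_eq_0:
  fixes h :: "'a::euclidean_space \<Rightarrow> 'b::real_normed_vector"
  assumes S: "open S" and h: "continuous_on S h" and ae: "AE x in lborel. x \<in> S \<longrightarrow> h x = 0"
    and z: "z \<in> S"
  shows "h z = 0"
proof (rule ccontr)
  assume "h z \<noteq> 0"
  have "open (h -` (- {0}) \<inter> S)" using h S continuous_on_open_vimage by blast
  moreover have "z \<in> h -` (- {0}) \<inter> S" using \<open>h z \<noteq> 0\<close> z by auto
  ultimately obtain a b where box: "box a b \<subseteq> h -` (- {0}) \<inter> S" "z \<in> box a b"
    "\<forall>i\<in>Basis. a \<bullet> i < b \<bullet> i"
    by (rule open_contains_box)
  have "AE x in lborel. x \<notin> box a b" using ae by eventually_elim (use box in auto)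
  then have "box a b \<in> null_sets lborel"
    by (subst AE_iff_null_sets) auto
  then have "emeasure lborel (box a b) = 0" by auto
  moreover have "0 < emeasure lborel (box a b)"
    using box unfolding emeasure_lborel_box_eq
    by (force intro!: prod_pos simp: mem_box algebra_simps)
  ultimately show False by simp
qed

lemma shifted_bergman_integral_ge:
  assumes "0 \<le> c" "c \<le> C"
  shows "(\<integral>\<^sup>+u. ennreal ((cmod (rhp_restrict f u))\<^sup>2 * min 1 (Re u powr \<alpha>)) * indicator {u. Re u > C + 1} u \<partial>lborel)
     \<le> shifted_bergman_integral \<alpha> f c"
  unfolding shifted_bergman_integral_def
proof (intro nn_integral_mono)
  fix u :: complex
  have "min 1 (Re u powr \<alpha>) \<le> (Re u - c) powr \<alpha>" if "Re u > C + 1"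
  proof (cases "\<alpha> \<ge> 0")
    case True
    then have "1 \<le> (Re u - c) powr \<alpha>" using that assms by (intro ge_one_powr_ge_zero) auto
    then show ?thesis by simp
  next
    case False
    then have "Re u powr \<alpha> \<le> (Re u - c) powr \<alpha>" using that assms by (intro powr_mono2') auto
    then show ?thesis by simp
  qed
  then show "ennreal ((cmod (rhp_restrict f u))\<^sup>2 * min 1 (Re u powr \<alpha>)) * indicator {u. Re u > C + 1} u
      \<le> ennreal ((cmod (rhp_restrict f u))\<^sup>2 * (Re u - c) powr \<alpha>) * indicator {u. Re u > c} u"
    using assms by (auto simp: indicator_def intro!: ennreal_leI mult_left_mono)
qed

lemma nn_integral_half_plane_pos:
  assumes hol: "f holomorphic_on right_half_plane" and C: "C \<ge> 0"
    and z: "z \<in> right_half_plane" "f z \<noteq> 0"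
  shows "0 < (\<integral>\<^sup>+u. ennreal ((cmod (rhp_restrict f u))\<^sup>2 * min 1 (Re u powr \<alpha>))
                       * indicator {u. Re u > C + 1} u \<partial>lborel)"
proof (rule ccontr)
  define S where "S = {u. Re u > C + 1}"
  have S: "open S" "S \<subseteq> right_half_plane" "of_real (C + 2) \<in> S"
    using C by (auto simp: S_def right_half_plane_def open_halfspace_Re_gt)
  note [measurable] = borel_measurable_rhp_restrict[OF hol]
  assume "\<not> 0 < (\<integral>\<^sup>+u. ennreal ((cmod (rhp_restrict f u))\<^sup>2 * min 1 (Re u powr \<alpha>))
                       * indicator {u. Re u > C + 1} u \<partial>lborel)"
  then have "(\<integral>\<^sup>+u. ennreal ((cmod (rhp_restrict f u))\<^sup>2 * min 1 (Re u powr \<alpha>)) * indicator S u \<partial>lborel) = 0"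
    by (simp add: S_def)
  then have "AE u in lborel. ennreal ((cmod (rhp_restrict f u))\<^sup>2 * min 1 (Re u powr \<alpha>)) * indicator S u = 0"
    by (subst (asm) nn_integral_0_iff_AE) (unfold S_def, measurable)
  then have "AE u in lborel. u \<in> S \<longrightarrow> f u = 0"
  proof eventually_elim
    case (elim u)
    show ?case
    proof
      assume "u \<in> S"
      then have "u \<in> right_half_plane" using S(2) by auto
      then show "f u = 0"
        using elim \<open>u \<in> S\<close> by (auto simp: right_half_plane_def ennreal_mult'[symmetric] min_def split: if_splits)
    qed
  qed
  then have "f u = 0" if "u \<in> S" for u
    using continuous_on_eq_0_if_AE_eq_0[OF S(1) _ _ that]
      holomorphic_on_imp_continuous_on[OF holomorphic_on_subset[OF hol S(2)]] by blast
  then have "f z = 0"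
    using analytic_continuation_open[OF S(1) open_right_half_plane _ connected_right_half_plane S(2) hol,
        of "\<lambda>_. 0"] S(3) z(1) by auto
  with z(2) show False ..
qed

lemma bergman_norm_comp_affine_power_bounded_below:
  assumes f: "f \<in> bergman_space \<alpha>" and \<alpha>: "\<alpha> > -1" and a: "0 < a" "a < 1" and b: "Re b \<ge> 0"
    and nonzero: "\<exists>z\<in>right_half_plane. f z \<noteq> 0"
  shows "\<exists>\<delta>>0. \<forall>n. \<delta> \<le> bergman_norm \<alpha> ((comp_op (\<lambda>w. complex_of_real a * w + b) ^^ n) f)"
proof -
  have hol: "f holomorphic_on right_half_plane"
    using f by (simp add: bergman_space_def)
  define C where "C = Re b / (1 - a)"
  have "C \<ge> 0" using a b by (simp add: C_def)
  define L where "L = ennreal (1/pi) * (\<integral>\<^sup>+u. ennreal ((cmod (rhp_restrict f u))\<^sup>2 * min 1 (Re u powr \<alpha>))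
                       * indicator {u. Re u > C + 1} u \<partial>lborel)"
  have "L \<le> bergman_norm_sq \<alpha> f"
    unfolding L_def bergman_norm_sq_eq_shifted_bergman_integral[OF hol]
    by (intro mult_left_mono shifted_bergman_integral_ge \<open>C \<ge> 0\<close>) auto
  then have "L < \<infinity>" using f by (auto simp: bergman_space_def)
  moreover have "L > 0"
    using nn_integral_half_plane_pos[OF hol \<open>C \<ge> 0\<close>] nonzero by (auto simp: L_def ennreal_zero_less_mult_iff)
  ultimately have "enn2real L > 0" by (simp add: enn2real_positive_iff)
  have "L \<le> bergman_norm_sq \<alpha> ((comp_op (\<lambda>w. complex_of_real a * w + b) ^^ n) f)" for n
  proof -
    have "1 powr (-2-\<alpha>) \<le> (a^n) powr (-2-\<alpha>)"
      using a \<alpha> by (intro powr_mono2') (auto simp: power_le_one)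
    then have "ennreal 1 * (\<integral>\<^sup>+u. ennreal ((cmod (rhp_restrict f u))\<^sup>2 * min 1 (Re u powr \<alpha>))
                       * indicator {u. Re u > C + 1} u \<partial>lborel)
        \<le> ennreal ((a^n) powr (-2-\<alpha>)) * shifted_bergman_integral \<alpha> f (Re (iterate_offset a b n))"
      using a b unfolding C_def
      by (intro mult_mono ennreal_leI shifted_bergman_integral_ge Re_iterate_offset_nonneg Re_iterate_offset_le) auto
    then show ?thesis
      unfolding L_def bergman_norm_sq_comp_affine_power[OF hol a(1) b] by (intro mult_left_mono) auto
  qed
  then have "sqrt (enn2real L) \<le> bergman_norm \<alpha> ((comp_op (\<lambda>w. complex_of_real a * w + b) ^^ n) f)" for n
    unfolding bergman_norm_def
    using bergman_norm_sq_comp_affine_power_finite[OF f \<alpha> a(1) b]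
    by (intro real_sqrt_le_mono enn2real_mono) auto
  moreover have "sqrt (enn2real L) > 0" using \<open>enn2real L > 0\<close> by simp
  ultimately show ?thesis by blast
qed

lemma li_yorke_chaotic_obtain_orbit:
  assumes "li_yorke_chaotic X N T"
  obtains x where "x \<in> X" "\<not> (\<exists>B. \<forall>n. N ((T ^^ n) x) \<le> B)"
    "\<not> (\<exists>\<delta>>0. \<forall>n. \<delta> \<le> N ((T ^^ n) x))"
proof -
  obtain x where x: "x \<in> X"
    and inf: "liminf (\<lambda>n. ereal (N ((T ^^ n) x))) = 0"
    and sup: "limsup (\<lambda>n. ereal (N ((T ^^ n) x))) = \<infinity>"
    using assms unfolding li_yorke_chaotic_def by blast
  have "\<not> (\<forall>n. N ((T ^^ n) x) \<le> B)" for B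
  proof
    assume "\<forall>n. N ((T ^^ n) x) \<le> B"
    then have "limsup (\<lambda>n. ereal (N ((T ^^ n) x))) \<le> ereal B"
      by (intro Limsup_bounded always_eventually) auto
    with sup show False by simp
  qed
  moreover have "\<not> (\<forall>n. \<delta> \<le> N ((T ^^ n) x))" if "\<delta> > 0" for \<delta>
  proof
    assume "\<forall>n. \<delta> \<le> N ((T ^^ n) x)"
    then have "ereal \<delta> \<le> liminf (\<lambda>n. ereal (N ((T ^^ n) x)))"
      by (intro Liminf_bounded always_eventually) auto
    with inf that show False by simp
  qed
  ultimately show ?thesis using x that by blast
qed

theorem mainTheorem4:
  fixes \<alpha> a :: real and b :: complex
  assumes "\<alpha> > -1" and "a > 0" and "Re b \<ge> 0"
  shows "\<not> li_yorke_chaotic (bergman_space \<alpha>) (bergman_norm \<alpha>)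
            (comp_op (\<lambda>w. complex_of_real a * w + b))"
proof
  assume "li_yorke_chaotic (bergman_space \<alpha>) (bergman_norm \<alpha>) (comp_op (\<lambda>w. complex_of_real a * w + b))"
  then obtain f where f: "f \<in> bergman_space \<alpha>"
    and unbounded: "\<not> (\<exists>B. \<forall>n. bergman_norm \<alpha> ((comp_op (\<lambda>w. complex_of_real a * w + b) ^^ n) f) \<le> B)"
    and not_bounded_below:
      "\<not> (\<exists>\<delta>>0. \<forall>n. \<delta> \<le> bergman_norm \<alpha> ((comp_op (\<lambda>w. complex_of_real a * w + b) ^^ n) f))"
    by (rule li_yorke_chaotic_obtain_orbit)
  consider "a \<ge> 1" | "a < 1" "\<forall>z\<in>right_half_plane. f z = 0" | "a < 1" "\<exists>z\<in>right_half_plane. f z \<noteq> 0"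
    by fastforce
  then show False
  proof cases
    case 1
    then show False using bergman_norm_comp_affine_power_bounded[OF f assms(1) _ assms(3)] unbounded by blast
  next
    case 2
    then show False using bergman_norm_comp_affine_power_eq_0[OF _ assms(2,3)] unbounded by fastforce
  next
    case 3
    then show False
      using bergman_norm_comp_affine_power_bounded_below[OF f assms(1,2) _ assms(3)] not_bounded_below by blast
  qed
qed

end
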